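(* Let $\mathbf A$ be an algebra of type $\tau$ equipped with a partition system $\sigma\mapsto\langle\odot^\sigma_0,\dots,\odot^\sigma_n\rangle$. Let $\equiv$ be the common equivalence relation $\equiv_\odot$ of the left normal bands in the system, let $I\subseteq A$ be a set of representatives of its classes, made into a join-semilattice $\mathbf I=\langle I,\vee\rangle$ by letting $p\vee q$ be the representative of the class of $p\odot q$ (for any $\odot$ of the system), with order $\preceq$, and let $A_p$ denote the class of $p$. Then: (1) each $A_p$ is closed under all operations of $\mathbf A$ of positive arity, and becomes an algebra $\mathbf A_p$ of type $\tau$ by setting $\omega^{\mathbf A_p}:=\omega^{\mathbf A}\odot^\omega_0 p$ for each constant symbol $\omega$; (2) for all $p\preceq q$ in $\mathbf I$ the assignment $\xi_{pq}$ with $\xi^{\sigma i}_{pq}(a):=a\odot^\sigma_i q$ (for each $n$-ary $\sigma$ and $0\le i\le n$, $a\in A_p$) is a well-defined metamorphism $\mathbf A_p\Rightarrow\mathbf A_q$; (3) $\{\xi_{pq}: p\preceq q\}$ is a semilattice directed system of metamorphisms and $\mathbf A$ is its Płonka sum.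
   Context: A left normal band on a set $A$ is a binary operation $\odot$ with $a\odot a=a$, $a\odot(b\odot c)=(a\odot b)\odot c$, $a\odot(b\odot c)=a\odot(c\odot b)$ for all $a,b,c$. Put $a\preceq_\odot b\iff b\odot a=b$ and $a\equiv_\odot b\iff a\preceq_\odot b$ and $b\preceq_\odot a$; then $\preceq_\odot$ is a preorder, $\equiv_\odot$ a congruence, and the quotient is a join-semilattice. Two left normal bands $\odot,\otimes$ on $A$ are homotactic if $\preceq_\odot=\preceq_\otimes$. For an algebra $\mathbf A$ of type $\tau$, a partition system is an assignment to each $n$-ary operation symbol $\sigma$ (constants: $n=0$) of a tuple $\langle\odot^\sigma_0,\dots,\odot^\sigma_n\rangle$ of left normal bands on $A$, all of them (over all $\sigma$) pairwise homotactic, such that for all $a_1,\dots,a_n,b\in A$: (PF4$^\sigma$) if $n\ge1$, $\sigma^{\mathbf A}(a_1,\dots,a_n)\odot^\sigma_0 b=\sigma^{\mathbf A}(a_1\odot^\sigma_1 b,\dots,a_n\odot^\sigma_n b)$; (PF5$^\sigma$) $b\odot^\sigma_0\sigma^{\mathbf A}(a_1,\dots,a_n)=b\odot^\sigma_0a_1\odot^\sigma_0\cdots\odot^\sigma_0a_n$ (for a constant $\omega$: $b\odot^\omega_0\omega^{\mathbf A}=b$). A metamorphism $f:\mathbf A\Rightarrow\mathbf B$ between algebras of type $\tau$ assigns to each $n$-ary symbol $\sigma$ a tuple of maps $f^{\sigma0},\dots,f^{\sigma n}:A\to B$ such that $f^{\sigma0}(\sigma^{\mathbf A}(a_1,\dots,a_n))=\sigma^{\mathbf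 B}(f^{\sigma1}(a_1),\dots,f^{\sigma n}(a_n))$ (for constants $f^{\omega0}(\omega^{\mathbf A})=\omega^{\mathbf B}$); composition and identities are componentwise. A semilattice directed system of metamorphisms over a join-semilattice $\mathbf I$ is a family of pairwise disjoint algebras $\mathbf A_p$ ($p\in I$) with metamorphisms $\xi_{pq}:\mathbf A_p\Rightarrow\mathbf A_q$ for $p\preceq q$ such that $\xi_{pp}$ is the identity and $\xi_{qr}\circ\xi_{pq}=\xi_{pr}$. Its Płonka sum is the algebra on $\biguplus_pA_p$ with $\sigma(a_1,\dots,a_n):=\sigma^{\mathbf A_q}(\xi^{\sigma1}_{p_1q}(a_1),\dots,\xi^{\sigma n}_{p_nq}(a_n))$ for $a_i\in A_{p_i}$, $q=p_1\vee\dots\vee p_n$, and (if $\tau$ has constants, $\mathbf I$ must have a least element $\bot$) $\omega:=\omega^{\mathbf A_\bot}$. *)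

theory Defs
  imports Main
begin

text \<open>Signature (type tau): a set of operation symbols S with arities ar.
  An algebra of type tau: carrier A and interpretation op, where op s xs is
  meaningful for lists xs of length ar s (constants: xs = []).
  A partition system: band s i is the i-th left normal band attached to
  symbol s (0 \<le> i \<le> ar s).\<close>

definition is_algebra :: "'a set \<Rightarrow> 's set \<Rightarrow> ('s \<Rightarrow> nat) \<Rightarrow> ('s \<Rightarrow> 'a list \<Rightarrow> 'a) \<Rightarrow> bool" where
  "is_algebra A S ar op \<longleftrightarrow>
     (\<forall>s\<in>S. \<forall>xs. length xs = ar s \<and> set xs \<subseteq> A \<longrightarrow> op s xs \<in> A)"

definition left_normal_band :: "'a set \<Rightarrow> ('a \<Rightarrow> 'a \<Rightarrow> 'a) \<Rightarrow> bool" where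
  "left_normal_band A f \<longleftrightarrow>
     (\<forall>a\<in>A. \<forall>b\<in>A. f a b \<in> A) \<and>
     (\<forall>a\<in>A. f a a = a) \<and>
     (\<forall>a\<in>A. \<forall>b\<in>A. \<forall>c\<in>A. f a (f b c) = f (f a b) c) \<and>
     (\<forall>a\<in>A. \<forall>b\<in>A. \<forall>c\<in>A. f a (f b c) = f a (f c b))"

definition band_le :: "('a \<Rightarrow> 'a \<Rightarrow> 'a) \<Rightarrow> 'a \<Rightarrow> 'a \<Rightarrow> bool" where
  "band_le f a b \<longleftrightarrow> f b a = b"

definition homotactic :: "'a set \<Rightarrow> ('a \<Rightarrow> 'a \<Rightarrow> 'a) \<Rightarrow> ('a \<Rightarrow> 'a \<Rightarrow> 'a) \<Rightarrow> bool" where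
  "homotactic A f g \<longleftrightarrow> (\<forall>a\<in>A. \<forall>b\<in>A. band_le f a b \<longleftrightarrow> band_le g a b)"

definition partition_system ::
  "'a set \<Rightarrow> 's set \<Rightarrow> ('s \<Rightarrow> nat) \<Rightarrow> ('s \<Rightarrow> 'a list \<Rightarrow> 'a) \<Rightarrow> ('s \<Rightarrow> nat \<Rightarrow> 'a \<Rightarrow> 'a \<Rightarrow> 'a) \<Rightarrow> bool" where
  "partition_system A S ar op band \<longleftrightarrow>
     (\<forall>s\<in>S. \<forall>i\<le>ar s. left_normal_band A (band s i)) \<and>
     (\<forall>s\<in>S. \<forall>i\<le>ar s. \<forall>t\<in>S. \<forall>j\<le>ar t. homotactic A (band s i) (band t j)) \<and>
     \<comment> \<open>PF4\<close>
     (\<forall>s\<in>S. 1 \<le> ar s \<longrightarrow> (\<forall>xs b. length xs = ar s \<and> set xs \<subseteq> A \<and> b \<in> A \<longrightarrow>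
         band s 0 (op s xs) b = op s (map (\<lambda>k. band s (Suc k) (xs ! k) b) [0..<ar s]))) \<and>
     \<comment> \<open>PF5 (for constants this reads b \<odot> omega = b)\<close>
     (\<forall>s\<in>S. \<forall>xs b. length xs = ar s \<and> set xs \<subseteq> A \<and> b \<in> A \<longrightarrow>
         band s 0 b (op s xs) = foldl (band s 0) b xs)"

text \<open>The common preorder / equivalence, computed from a fixed band of the system
  (band s0 0 for a fixed symbol s0; all bands of the system are homotactic).\<close>
definition band_eqv :: "('a \<Rightarrow> 'a \<Rightarrow> 'a) \<Rightarrow> 'a \<Rightarrow> 'a \<Rightarrow> bool" where
  "band_eqv f a b \<longleftrightarrow> band_le f a b \<and> band_le f b a"

definition cls :: "'a set \<Rightarrow> ('a \<Rightarrow> 'a \<Rightarrow> 'a) \<Rightarrow> 'a \<Rightarrow> 'a set" where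
  "cls A f p = {a\<in>A. band_eqv f a p}"

definition repr :: "'a set \<Rightarrow> ('a \<Rightarrow> 'a \<Rightarrow> 'a) \<Rightarrow> 'a \<Rightarrow> 'a" where
  "repr I f a = (THE p. p \<in> I \<and> band_eqv f a p)"

definition rjoin :: "'a set \<Rightarrow> ('a \<Rightarrow> 'a \<Rightarrow> 'a) \<Rightarrow> 'a \<Rightarrow> 'a \<Rightarrow> 'a" where
  "rjoin I f p q = repr I f (f p q)"

end

theory Submission
  imports Defs
begin

text \<open>All bands of a partition system induce the same preorder, and PF4/PF5 say that
  the equivalence class of \<open>\<sigma>(a\<^sub>1,\<dots>,a\<^sub>n)\<close> is the join of the classes of the \<open>a\<^sub>i\<close>;
  in particular each class is a subalgebra. Right multiplication by an upper element
  \<open>q\<close> moves an element into the class of \<open>q\<close>, PF4 makes these maps metamorphisms,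
  and the absorption law \<open>(a \<odot> q) \<odot> r = a \<odot> r\<close> for \<open>q \<preceq> r\<close> makes them compose.
  Finally, since \<open>\<sigma>(a\<^sub>1,\<dots>,a\<^sub>n)\<close> lies above the join \<open>q\<close> of the classes of its
  arguments, PF4 with \<open>b = q\<close> exhibits \<open>\<sigma>\<close> as the Plonka sum operation.\<close>

lemma lnb_closed: "left_normal_band A f \<Longrightarrow> a \<in> A \<Longrightarrow> b \<in> A \<Longrightarrow> f a b \<in> A"
  unfolding left_normal_band_def by blast

lemma lnb_idem: "left_normal_band A f \<Longrightarrow> a \<in> A \<Longrightarrow> f a a = a"
  unfolding left_normal_band_def by blast

lemma lnb_assoc:
  "left_normal_band A f \<Longrightarrow> a \<in> A \<Longrightarrow> b \<in> A \<Longrightarrow> c \<in> A \<Longrightarrow> f (f a b) c = f a (f b c)"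
  unfolding left_normal_band_def by metis

lemma lnb_swap:
  "left_normal_band A f \<Longrightarrow> a \<in> A \<Longrightarrow> b \<in> A \<Longrightarrow> c \<in> A \<Longrightarrow> f (f a b) c = f (f a c) b"
  unfolding left_normal_band_def by metis

lemma band_le_refl: "left_normal_band A f \<Longrightarrow> a \<in> A \<Longrightarrow> band_le f a a"
  by (simp add: band_le_def lnb_idem)

lemma band_le_trans:
  assumes f: "left_normal_band A f" and "a \<in> A" "b \<in> A" "c \<in> A"
    and ab: "band_le f a b" and bc: "band_le f b c"
  shows "band_le f a c"
proof -
  have "f c a = f (f c b) a" using bc by (simp add: band_le_def)
  also have "\<dots> = f c (f b a)" using lnb_assoc[OF f] assms(2-4) by blast
  also have "\<dots> = c" using ab bc by (simp add: band_le_def)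
  finally show ?thesis by (simp add: band_le_def)
qed

lemma band_le_mult_left:
  "left_normal_band A f \<Longrightarrow> a \<in> A \<Longrightarrow> b \<in> A \<Longrightarrow> band_le f a (f a b)"
  by (simp add: band_le_def lnb_swap[of A f a b a] lnb_idem)

lemma band_le_mult_right:
  "left_normal_band A f \<Longrightarrow> a \<in> A \<Longrightarrow> b \<in> A \<Longrightarrow> band_le f b (f a b)"
  by (simp add: band_le_def lnb_assoc[of A f a b b] lnb_idem)

lemma band_mult_le:
  "left_normal_band A f \<Longrightarrow> a \<in> A \<Longrightarrow> b \<in> A \<Longrightarrow> c \<in> A \<Longrightarrow> band_le f a c \<Longrightarrow> band_le f b c
    \<Longrightarrow> band_le f (f a b) c"
  by (simp add: band_le_def lnb_assoc[of A f c a b, symmetric])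

lemma band_eqv_mult_of_le:
  assumes f: "left_normal_band A f" and a: "a \<in> A" and q: "q \<in> A" and aq: "band_le f a q"
  shows "band_eqv f (f a q) q"
proof -
  have "f q (f a q) = f (f q a) q" using lnb_assoc[OF f q a q] by simp
  also have "\<dots> = q" using aq lnb_idem[OF f q] by (simp add: band_le_def)
  finally show ?thesis
    using band_le_mult_right[OF f a q] by (simp add: band_eqv_def band_le_def)
qed

lemma band_mult_absorb_right:
  assumes f: "left_normal_band A f" and "a \<in> A" "q \<in> A" "r \<in> A" and qr: "band_le f q r"
  shows "f (f a q) r = f a r"
proof -
  have "f (f a q) r = f a (f r q)" using lnb_swap[OF f] lnb_assoc[OF f] assms(2-4) by metis
  then show ?thesis using qr by (simp add: band_le_def)
qed

lemma foldl_fixed: "\<forall>x\<in>set xs. f b x = b \<Longrightarrow> foldl f b xs = b"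
  by (induction xs) auto

lemma foldl_band_swap:
  "left_normal_band A f \<Longrightarrow> b \<in> A \<Longrightarrow> y \<in> A \<Longrightarrow> set ys \<subseteq> A \<Longrightarrow>
    f (foldl f b ys) y = foldl f (f b y) ys"
proof (induction ys arbitrary: b)
  case Nil
  then show ?case by simp
next
  case (Cons z zs)
  have "f (foldl f b (z # zs)) y = foldl f (f (f b z) y) zs"
    using Cons by (simp add: lnb_closed)
  also have "f (f b z) y = f (f b y) z"
    using lnb_swap Cons.prems by fastforce
  finally show ?case by simp
qed

lemma foldl_band_absorb:
  "left_normal_band A f \<Longrightarrow> b \<in> A \<Longrightarrow> set xs \<subseteq> A \<Longrightarrow> x \<in> set xs \<Longrightarrow>
    f (foldl f b xs) x = foldl f b xs"
proof (induction xs arbitrary: b)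
  case Nil
  then show ?case by simp
next
  case (Cons y ys)
  show ?case
  proof (cases "x = y")
    case True
    have "f (foldl f b (y # ys)) x = foldl f (f (f b y) y) ys"
      using foldl_band_swap[of A f "f b y" y ys] Cons.prems True by (simp add: lnb_closed)
    also have "f (f b y) y = f b y"
      using Cons.prems lnb_assoc[of A f b y y] lnb_idem[of A f y] by simp
    finally show ?thesis by simp
  next
    case False
    then show ?thesis using Cons by (simp add: lnb_closed)
  qed
qed

locale represented_partition_system =
  fixes A :: "'a set" and S :: "'s set" and ar :: "'s \<Rightarrow> nat"
    and op :: "'s \<Rightarrow> 'a list \<Rightarrow> 'a" and band :: "'s \<Rightarrow> nat \<Rightarrow> 'a \<Rightarrow> 'a \<Rightarrow> 'a"
    and s0 :: 's and I :: "'a set"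
  assumes alg: "is_algebra A S ar op"
    and ps: "partition_system A S ar op band"
    and s0: "s0 \<in> S"
    and I_sub: "I \<subseteq> A"
    and I_rep: "\<forall>a\<in>A. \<exists>!p. p \<in> I \<and> band_eqv (band s0 0) a p"
begin

abbreviation le :: "'a \<Rightarrow> 'a \<Rightarrow> bool" (infix "\<preceq>" 50)
  where "a \<preceq> b \<equiv> band_le (band s0 0) a b"

abbreviation block :: "'a \<Rightarrow> 'a set"
  where "block \<equiv> cls A (band s0 0)"

abbreviation rep :: "'a \<Rightarrow> 'a"
  where "rep \<equiv> repr I (band s0 0)"

abbreviation join :: "'a \<Rightarrow> 'a \<Rightarrow> 'a"
  where "join \<equiv> rjoin I (band s0 0)"

lemma I_subsetD: "p \<in> I \<Longrightarrow> p \<in> A"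
  using I_sub by blast

lemma band_lnb: "s \<in> S \<Longrightarrow> i \<le> ar s \<Longrightarrow> left_normal_band A (band s i)"
  using ps unfolding partition_system_def by blast

lemma lnb0: "left_normal_band A (band s0 0)"
  using band_lnb s0 by blast

lemma band_le_iff:
  "s \<in> S \<Longrightarrow> i \<le> ar s \<Longrightarrow> a \<in> A \<Longrightarrow> b \<in> A \<Longrightarrow> band_le (band s i) a b \<longleftrightarrow> a \<preceq> b"
  using ps s0 unfolding partition_system_def homotactic_def by (meson le0)

lemma band_absorb_iff:
  "s \<in> S \<Longrightarrow> i \<le> ar s \<Longrightarrow> a \<in> A \<Longrightarrow> b \<in> A \<Longrightarrow> band s i b a = b \<longleftrightarrow> a \<preceq> b"
  using band_le_iff by (simp add: band_le_def)

lemma band_eqv_iff: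
  "s \<in> S \<Longrightarrow> i \<le> ar s \<Longrightarrow> a \<in> A \<Longrightarrow> b \<in> A \<Longrightarrow>
    band_eqv (band s i) a b \<longleftrightarrow> band_eqv (band s0 0) a b"
  using band_le_iff by (simp add: band_eqv_def)

lemma op_closed: "s \<in> S \<Longrightarrow> length xs = ar s \<Longrightarrow> set xs \<subseteq> A \<Longrightarrow> op s xs \<in> A"
  using alg unfolding is_algebra_def by blast

lemma op_mult:
  "s \<in> S \<Longrightarrow> 1 \<le> ar s \<Longrightarrow> length xs = ar s \<Longrightarrow> set xs \<subseteq> A \<Longrightarrow> b \<in> A \<Longrightarrow>
    band s 0 (op s xs) b = op s (map (\<lambda>k. band s (Suc k) (xs ! k) b) [0..<ar s])"
  using ps unfolding partition_system_def by blast

lemma mult_op: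
  "s \<in> S \<Longrightarrow> length xs = ar s \<Longrightarrow> set xs \<subseteq> A \<Longrightarrow> b \<in> A \<Longrightarrow>
    band s 0 b (op s xs) = foldl (band s 0) b xs"
  using ps unfolding partition_system_def by blast

lemma le_refl: "a \<in> A \<Longrightarrow> a \<preceq> a"
  using band_le_refl[OF lnb0] .

lemma le_trans: "a \<in> A \<Longrightarrow> b \<in> A \<Longrightarrow> c \<in> A \<Longrightarrow> a \<preceq> b \<Longrightarrow> b \<preceq> c \<Longrightarrow> a \<preceq> c"
  using band_le_trans[OF lnb0] .

lemma mem_block_iff: "a \<in> block p \<longleftrightarrow> a \<in> A \<and> a \<preceq> p \<and> p \<preceq> a"
  by (simp add: cls_def band_eqv_def)

lemma block_subset: "block p \<subseteq> A"
  by (simp add: cls_def)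

lemma rep_in_I_eqv: "a \<in> A \<Longrightarrow> rep a \<in> I \<and> band_eqv (band s0 0) a (rep a)"
  unfolding repr_def using I_rep by (rule_tac theI') blast

lemma rep_in_I: "a \<in> A \<Longrightarrow> rep a \<in> I"
  using rep_in_I_eqv by blast

lemma rep_eqv: "a \<in> A \<Longrightarrow> band_eqv (band s0 0) a (rep a)"
  using rep_in_I_eqv by blast

lemma rep_unique: "a \<in> A \<Longrightarrow> p \<in> I \<Longrightarrow> band_eqv (band s0 0) a p \<Longrightarrow> rep a = p"
  unfolding repr_def using I_rep by (rule_tac the1_equality) blast+

lemma le_antisym_I: "p \<in> I \<Longrightarrow> q \<in> I \<Longrightarrow> p \<preceq> q \<Longrightarrow> q \<preceq> p \<Longrightarrow> p = q"
  using rep_unique[of q q] rep_unique[of q p] le_refl I_subsetD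
  unfolding band_eqv_def by metis

lemma blocks_disjoint: "p \<in> I \<Longrightarrow> q \<in> I \<Longrightarrow> p \<noteq> q \<Longrightarrow> block p \<inter> block q = {}"
  using rep_unique unfolding cls_def by blast

lemma Union_blocks: "A = (\<Union>p\<in>I. block p)"
  using rep_in_I rep_eqv unfolding cls_def by blast

lemma join_in_I: "p \<in> A \<Longrightarrow> q \<in> A \<Longrightarrow> join p q \<in> I"
  unfolding rjoin_def by (intro rep_in_I lnb_closed[OF lnb0])

lemma join_eqv: "p \<in> A \<Longrightarrow> q \<in> A \<Longrightarrow> band_eqv (band s0 0) (band s0 0 p q) (join p q)"
  unfolding rjoin_def by (intro rep_eqv lnb_closed[OF lnb0])

lemma le_join1: "p \<in> A \<Longrightarrow> q \<in> A \<Longrightarrow> p \<preceq> join p q"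
  using le_trans[OF _ lnb_closed[OF lnb0] I_subsetD[OF join_in_I]] band_le_mult_left[OF lnb0]
    join_eqv unfolding band_eqv_def by blast

lemma le_join2: "p \<in> A \<Longrightarrow> q \<in> A \<Longrightarrow> q \<preceq> join p q"
  using le_trans[OF _ lnb_closed[OF lnb0] I_subsetD[OF join_in_I]] band_le_mult_right[OF lnb0]
    join_eqv unfolding band_eqv_def by blast

lemma join_le: "p \<in> A \<Longrightarrow> q \<in> A \<Longrightarrow> r \<in> A \<Longrightarrow> p \<preceq> r \<Longrightarrow> q \<preceq> r \<Longrightarrow> join p q \<preceq> r"
  using le_trans[OF I_subsetD[OF join_in_I] lnb_closed[OF lnb0]] band_mult_le[OF lnb0]
    join_eqv unfolding band_eqv_def by blast

lemma arg_le_op: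
  assumes s: "s \<in> S" and xs: "length xs = ar s" "set xs \<subseteq> A" and x: "x \<in> set xs"
  shows "x \<preceq> op s xs"
proof -
  let ?u = "op s xs"
  have u: "?u \<in> A" using op_closed[OF s xs] .
  have L: "left_normal_band A (band s 0)" using band_lnb[OF s] by simp
  have "foldl (band s 0) ?u xs = ?u"
    using mult_op[OF s xs u] lnb_idem[OF L u] by simp
  then have "band s 0 ?u x = ?u" using foldl_band_absorb[OF L u xs(2) x] by simp
  then show ?thesis using band_absorb_iff[OF s le0] x xs(2) u by blast
qed

lemma op_le_of_args_le:
  assumes s: "s \<in> S" and xs: "length xs = ar s" "set xs \<subseteq> A"
    and b: "b \<in> A" and le: "\<forall>x\<in>set xs. x \<preceq> b"
  shows "op s xs \<preceq> b"
proof -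
  have "foldl (band s 0) b xs = b"
    using le xs(2) band_absorb_iff[OF s le0 _ b] by (intro foldl_fixed) blast
  then have "band s 0 b (op s xs) = b" using mult_op[OF s xs b] by simp
  then show ?thesis using band_absorb_iff[OF s le0 op_closed[OF s xs] b] by blast
qed

lemma le_op_of_le_args:
  assumes s: "s \<in> S" and ar: "1 \<le> ar s" and xs: "length xs = ar s" "set xs \<subseteq> A"
    and b: "b \<in> A" and le: "\<forall>x\<in>set xs. b \<preceq> x"
  shows "b \<preceq> op s xs"
proof -
  have "map (\<lambda>k. band s (Suc k) (xs ! k) b) [0..<ar s] = map ((!) xs) [0..<length xs]"
  proof (rule map_cong)
    fix k assume "k \<in> set [0..<length xs]"
    then have k: "xs ! k \<in> set xs" "Suc k \<le> ar s" using xs(1) by auto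
    then show "band s (Suc k) (xs ! k) b = xs ! k"
      using band_absorb_iff[OF s k(2) b] le xs(2) by blast
  qed (simp add: xs(1))
  then have "band s 0 (op s xs) b = op s xs" using op_mult[OF s ar xs b] by (simp add: map_nth)
  then show ?thesis using band_absorb_iff[OF s le0 b op_closed[OF s xs]] by blast
qed

lemma op_in_block:
  assumes "s \<in> S" "1 \<le> ar s" "length xs = ar s" "set xs \<subseteq> block p" "p \<in> A"
  shows "op s xs \<in> block p"
proof -
  have "set xs \<subseteq> A" using assms(4) by (auto simp: mem_block_iff)
  then show ?thesis
    using assms op_closed op_le_of_args_le le_op_of_le_args by (auto simp: mem_block_iff subset_iff)
qed

lemma const_le: "w \<in> S \<Longrightarrow> ar w = 0 \<Longrightarrow> b \<in> A \<Longrightarrow> op w [] \<preceq> b"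
  using op_le_of_args_le[of w "[]"] by simp

lemma mult_in_block:
  assumes s: "s \<in> S" "i \<le> ar s" and a: "a \<in> A" and q: "q \<in> A" and aq: "a \<preceq> q"
  shows "band s i a q \<in> block q"
proof -
  have L: "left_normal_band A (band s i)" using band_lnb[OF s] .
  have "band_eqv (band s i) (band s i a q) q"
    using band_eqv_mult_of_le[OF L a q] band_le_iff[OF s a q] aq by blast
  then show ?thesis
    using band_eqv_iff[OF s lnb_closed[OF L a q] q] lnb_closed[OF L a q] by (simp add: cls_def)
qed

lemma mult_block_self: "s \<in> S \<Longrightarrow> i \<le> ar s \<Longrightarrow> a \<in> block p \<Longrightarrow> p \<in> A \<Longrightarrow> band s i a p = a"
  using band_absorb_iff by (simp add: mem_block_iff)

lemma mult_mult_absorb: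
  "s \<in> S \<Longrightarrow> i \<le> ar s \<Longrightarrow> a \<in> A \<Longrightarrow> q \<in> A \<Longrightarrow> r \<in> A \<Longrightarrow> q \<preceq> r \<Longrightarrow>
    band s i (band s i a q) r = band s i a r"
  using band_mult_absorb_right[OF band_lnb] band_le_iff by blast

lemma foldl_join_le:
  "a \<in> I \<Longrightarrow> set ys \<subseteq> I \<Longrightarrow> u \<in> A \<Longrightarrow> a \<preceq> u \<Longrightarrow> \<forall>y\<in>set ys. y \<preceq> u \<Longrightarrow>
    foldl join a ys \<in> I \<and> foldl join a ys \<preceq> u"
  by (induction ys arbitrary: a) (auto simp: I_subsetD join_in_I join_le)

lemma op_eq_plonka:
  assumes s: "s \<in> S" and ar: "1 \<le> ar s" and xs: "length xs = ar s" "set xs \<subseteq> A"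
  defines "q \<equiv> foldl join (rep (hd xs)) (map rep (tl xs))"
  shows "op s xs = op s (map (\<lambda>k. band s (Suc k) (xs ! k) q) [0..<ar s])"
proof -
  let ?u = "op s xs"
  have u: "?u \<in> A" using op_closed[OF s xs] .
  have rep_le: "rep x \<preceq> ?u" if "x \<in> set xs" for x
    using that xs(2) arg_le_op[OF s xs] rep_eqv rep_in_I I_subsetD le_trans u
    unfolding band_eqv_def by blast
  have ne: "xs \<noteq> []" using xs(1) ar by auto
  have hd: "hd xs \<in> set xs" and tl: "set (tl xs) \<subseteq> set xs"
    using ne by (auto dest: list.set_sel(2))
  have "q \<in> I \<and> q \<preceq> ?u" unfolding q_def
  proof (rule foldl_join_le)
    show "set (map rep (tl xs)) \<subseteq> I" "\<forall>y\<in>set (map rep (tl xs)). y \<preceq> ?u"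
      using tl xs(2) rep_in_I rep_le by auto
  qed (use hd xs(2) rep_in_I rep_le u in auto)
  then have "band s 0 ?u q = ?u" using band_absorb_iff[OF s le0 I_subsetD u] by blast
  then show ?thesis using op_mult[OF s ar xs I_subsetD] \<open>q \<in> I \<and> q \<preceq> ?u\<close> by simp
qed

lemma bottom:
  assumes w: "w \<in> S" "ar w = 0"
  shows "\<exists>bot\<in>I. (\<forall>p\<in>A. bot \<preceq> p) \<and> (\<forall>w\<in>S. ar w = 0 \<longrightarrow> op w [] = band w 0 (op w []) bot)"
proof (intro bexI conjI ballI impI)
  let ?bot = "rep (op w [])"
  have o: "op w [] \<in> A" using op_closed[OF w(1)] w(2) by simp
  have bot: "?bot \<in> A" using I_subsetD rep_in_I[OF o] .
  have bot_le: "?bot \<preceq> op w []" using rep_eqv[OF o] by (simp add: band_eqv_def)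
  show "?bot \<in> I" using rep_in_I[OF o] .
  show "?bot \<preceq> p" if "p \<in> A" for p
    using le_trans[OF bot o that bot_le const_le[OF w that]] .
  fix w' assume w': "w' \<in> S" "ar w' = 0"
  have o': "op w' [] \<in> A" using op_closed[OF w'(1)] w'(2) by simp
  have "?bot \<preceq> op w' []" using le_trans[OF bot o o' bot_le const_le[OF w o']] .
  then show "op w' [] = band w' 0 (op w' []) ?bot" using band_absorb_iff[OF w'(1) le0 bot o'] by simp
qed

lemma xi_metamorphism:
  assumes p: "p \<in> A" and q: "q \<in> A" and pq: "p \<preceq> q"
  shows "(\<forall>s\<in>S. \<forall>i\<le>ar s. \<forall>a\<in>block p. band s i a q \<in> block q) \<and>
    (\<forall>s\<in>S. 1 \<le> ar s \<longrightarrow> (\<forall>xs. length xs = ar s \<and> set xs \<subseteq> block p \<longrightarrow>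
      band s 0 (op s xs) q = op s (map (\<lambda>k. band s (Suc k) (xs ! k) q) [0..<ar s]))) \<and>
    (\<forall>w\<in>S. ar w = 0 \<longrightarrow> band w 0 (band w 0 (op w []) p) q = band w 0 (op w []) q)"
proof (intro ballI impI conjI allI)
  show "band s i a q \<in> block q" if "s \<in> S" "i \<le> ar s" "a \<in> block p" for s i a
    using mult_in_block[OF that(1,2) _ q] le_trans[OF _ p q _ pq] that(3)
    by (simp add: mem_block_iff)
  show "band s 0 (op s xs) q = op s (map (\<lambda>k. band s (Suc k) (xs ! k) q) [0..<ar s])"
    if "s \<in> S" "1 \<le> ar s" "length xs = ar s \<and> set xs \<subseteq> block p" for s xs
    using op_mult[OF that(1,2) _ _ q] that(3) block_subset by blast
  show "band w 0 (band w 0 (op w []) p) q = band w 0 (op w []) q" if "w \<in> S" "ar w = 0" for w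
    using mult_mult_absorb[OF that(1) le0 _ p q pq] op_closed[OF that(1)] that(2) by simp
qed

end

theorem theorem4p5:
  fixes A :: "'a set" and S :: "'s set" and ar :: "'s \<Rightarrow> nat"
    and op :: "'s \<Rightarrow> 'a list \<Rightarrow> 'a" and band :: "'s \<Rightarrow> nat \<Rightarrow> 'a \<Rightarrow> 'a \<Rightarrow> 'a"
    and s0 :: 's and I :: "'a set"
  assumes alg: "is_algebra A S ar op"
    and ps: "partition_system A S ar op band"
    and s0: "s0 \<in> S"
    and I_sub: "I \<subseteq> A"
    and I_rep: "\<forall>a\<in>A. \<exists>!p. p \<in> I \<and> band_eqv (band s0 0) a p"
  shows
    \<comment> \<open>I with the join is a join-semilattice with order \<preceq>\<close>
    "(\<forall>p\<in>I. band_le (band s0 0) p p) \<and>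
     (\<forall>p\<in>I. \<forall>q\<in>I. \<forall>r\<in>I. band_le (band s0 0) p q \<and> band_le (band s0 0) q r \<longrightarrow> band_le (band s0 0) p r) \<and>
     (\<forall>p\<in>I. \<forall>q\<in>I. band_le (band s0 0) p q \<and> band_le (band s0 0) q p \<longrightarrow> p = q) \<and>
     (\<forall>p\<in>I. \<forall>q\<in>I. rjoin I (band s0 0) p q \<in> I \<and>
        band_le (band s0 0) p (rjoin I (band s0 0) p q) \<and> band_le (band s0 0) q (rjoin I (band s0 0) p q) \<and>
        (\<forall>r\<in>I. band_le (band s0 0) p r \<and> band_le (band s0 0) q r \<longrightarrow> band_le (band s0 0) (rjoin I (band s0 0) p q) r)) \<and>
     \<comment> \<open>(1) closure of A_p\<close>
     (\<forall>p\<in>I. \<forall>s\<in>S. 1 \<le> ar s \<longrightarrow> (\<forall>xs. length xs = ar s \<and> set xs \<subseteq> cls A (band s0 0) p \<longrightarrow>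
          op s xs \<in> cls A (band s0 0) p)) \<and>
     (\<forall>p\<in>I. \<forall>w\<in>S. ar w = 0 \<longrightarrow> band w 0 (op w []) p \<in> cls A (band s0 0) p) \<and>
     \<comment> \<open>(2) xi_pq is a well-defined metamorphism A_p => A_q\<close>
     (\<forall>p\<in>I. \<forall>q\<in>I. band_le (band s0 0) p q \<longrightarrow>
        (\<forall>s\<in>S. \<forall>i\<le>ar s. \<forall>a\<in>cls A (band s0 0) p. band s i a q \<in> cls A (band s0 0) q) \<and>
        (\<forall>s\<in>S. 1 \<le> ar s \<longrightarrow> (\<forall>xs. length xs = ar s \<and> set xs \<subseteq> cls A (band s0 0) p \<longrightarrow>
            band s 0 (op s xs) q = op s (map (\<lambda>k. band s (Suc k) (xs ! k) q) [0..<ar s]))) \<and>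
        (\<forall>w\<in>S. ar w = 0 \<longrightarrow> band w 0 (band w 0 (op w []) p) q = band w 0 (op w []) q)) \<and>
     \<comment> \<open>(3) semilattice directed system\<close>
     (\<forall>p\<in>I. \<forall>q\<in>I. p \<noteq> q \<longrightarrow> cls A (band s0 0) p \<inter> cls A (band s0 0) q = {}) \<and>
     (\<forall>p\<in>I. \<forall>s\<in>S. \<forall>i\<le>ar s. \<forall>a\<in>cls A (band s0 0) p. band s i a p = a) \<and>
     (\<forall>p\<in>I. \<forall>q\<in>I. \<forall>r\<in>I. band_le (band s0 0) p q \<and> band_le (band s0 0) q r \<longrightarrow>
        (\<forall>s\<in>S. \<forall>i\<le>ar s. \<forall>a\<in>cls A (band s0 0) p. band s i (band s i a q) r = band s i a r)) \<and>
     \<comment> \<open>(3) A is the Plonka sum\<close>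
     A = (\<Union>p\<in>I. cls A (band s0 0) p) \<and>
     (\<forall>s\<in>S. 1 \<le> ar s \<longrightarrow> (\<forall>xs. length xs = ar s \<and> set xs \<subseteq> A \<longrightarrow>
        (let q = foldl (rjoin I (band s0 0)) (repr I (band s0 0) (hd xs)) (map (repr I (band s0 0)) (tl xs))
         in op s xs = op s (map (\<lambda>k. band s (Suc k) (xs ! k) q) [0..<ar s])))) \<and>
     ((\<exists>w\<in>S. ar w = 0) \<longrightarrow>
        (\<exists>bot\<in>I. (\<forall>p\<in>I. band_le (band s0 0) bot p) \<and>
           (\<forall>w\<in>S. ar w = 0 \<longrightarrow> op w [] = band w 0 (op w []) bot)))"
proof -
  interpret represented_partition_system A S ar op band s0 I
    using assms by unfold_locales
  show ?thesis
    apply (intro conjI)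
    subgoal using le_refl I_subsetD by blast
    subgoal using le_trans I_subsetD by blast
    subgoal using le_antisym_I by blast
    subgoal using join_in_I le_join1 le_join2 join_le I_subsetD by simp
    subgoal using op_in_block I_subsetD by blast
    subgoal using mult_in_block op_closed const_le I_subsetD by simp
    subgoal using xi_metamorphism I_subsetD by blast
    subgoal using blocks_disjoint by blast
    subgoal using mult_block_self I_subsetD by blast
    subgoal using mult_mult_absorb I_subsetD by (simp add: mem_block_iff)
    subgoal using Union_blocks .
    subgoal using op_eq_plonka by (simp add: Let_def)
    subgoal using bottom I_subsetD by blast
    done
qed

end
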